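(* Let $\mathcal{D}$ be a distribution over $\mathcal{X}\times\{0,\ldots,c-1\}$, let $h:\mathcal{X}\to\mathcal{Z}$ be a hypothesis and $\ell:\mathcal{Z}\times\{0,\dots,c-1\}\to\mathbb{R}_{\ge0}$ a loss, so that $\ell(h(x),y)=\sum_{r=0}^{c-1}\{y=r\}\,\ell(h(x),r)$, with $\mathbb{E}_r:=\mathbb{E}_x[\ell(h(x),r)]$ finite for all $r$. Let $(x_1,y_1),\ldots,(x_k,y_k)$ be drawn i.i.d. from $\mathcal{D}$, let $\alpha_r=\frac1k\sum_{i=1}^k\{y_i=r\}$ for $r=0,\dots,c-1$, and let $z=((x_1,\ldots,x_k),\boldsymbol\alpha)$ with $\boldsymbol\alpha=(\alpha_0,\ldots,\alpha_{c-1})$. With $p_r=\mathbb{P}(y=r)$, define $$\ell_b(h,z)=\sum_{r=0}^{c-1}(\alpha_r-p_r)\sum_{i=1}^k\big(\ell(h(x_i),r)-\mathbb{E}_r\big)+\sum_{r=0}^{c-1}p_r\,\mathbb{E}_r.$$ Then $$\mathbb{E}_z[\ell_b(h,z)]=\mathbb{E}_{(x,y)\sim\mathcal{D}}[\ell(h(x),y)],\qquad \mathrm{Var}_z(\ell_b(h,z))\le 64\,\mathbb{E}_x\Big[\Big(\max_{r}\ell(h(x),r)\Big)^2\Big].$$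
   Context: $\{\cdot\}$ denotes the indicator of the predicate; $x$ is distributed as the $\mathcal{X}$-marginal of $\mathcal{D}$; $\mathcal{Z}$ is an arbitrary output space. *)

theory Defs
  imports "HOL-Probability.Probability"
begin

definition emp_freq :: "nat \<Rightarrow> nat \<Rightarrow> (nat \<Rightarrow> 'x \<times> nat) \<Rightarrow> real" where
  "emp_freq k r \<omega> = (1 / real k) * (\<Sum>i<k. if snd (\<omega> i) = r then 1 else 0)"

(* the loss ell_b(h,z), z = ((x_1..x_k), alpha); p r = P(y=r), E r = E_x[ell(h x, r)] *)
definition ell_b :: "('z \<Rightarrow> nat \<Rightarrow> real) \<Rightarrow> ('x \<Rightarrow> 'z) \<Rightarrow> nat \<Rightarrow> nat
    \<Rightarrow> (nat \<Rightarrow> real) \<Rightarrow> (nat \<Rightarrow> real) \<Rightarrow> (nat \<Rightarrow> 'x \<times> nat) \<Rightarrow> real" where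
  "ell_b L h c k p E \<omega> =
     (\<Sum>r<c. (emp_freq k r \<omega> - p r) * (\<Sum>i<k. L (h (fst (\<omega> i))) r - E r))
     + (\<Sum>r<c. p r * E r)"

end

(* Write a_r(q) = [y = r] - p_r and b_r(q) = l(h(x), r) - E_r for q = (x, y); both are centred
   under D. Since alpha_r - p_r is the sample mean of a_r, ell_b(h, z) is the V-statistic
   (1/k) sum_{j,i} f(q_j, q_i) of the kernel f(q, q') = sum_r a_r(q) b_r(q'), shifted by
   sum_r p_r E_r. By independence only the diagonal j = i contributes to its mean, and
   E f(q, q) = sum_r (E [y = r] l(h(x), r) - p_r E_r), which gives the first claim.
   In the second moment, E [f(q_j, q_i) f(q_j', q_i')] vanishes as soon as one of the four
   indices occurs only once, which leaves at most 3 k^2 nonzero terms. With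
   M(q) = max_r l(h(x), r) we have sum_r |a_r| <= 2 and |b_r| <= M + E M, so each term is at
   most 16 E M^2, and the variance is at most 48 E M^2. *)

theory Submission
  imports Defs
begin

section \<open>Centred factors in products of independent coordinates\<close>

lemma
  fixes g :: "'a \<Rightarrow> real"
  assumes M: "prob_space M" and m: "m \<in> I" and g: "integrable M g"
  shows integrable_PiM_component: "integrable (PiM I (\<lambda>_. M)) (\<lambda>\<omega>. g (\<omega> m))"
    and integral_PiM_component: "(\<integral>\<omega>. g (\<omega> m) \<partial>PiM I (\<lambda>_. M)) = (\<integral>x. g x \<partial>M)"
proof -
  have proj: "(\<lambda>\<omega>. \<omega> m) \<in> measurable (PiM I (\<lambda>_. M)) M"
    using m by (rule measurable_component_singleton)
  have distr: "distr (PiM I (\<lambda>_. M)) M (\<lambda>\<omega>. \<omega> m) = M"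
    using M m by (intro distr_PiM_component)
  have g_meas: "g \<in> borel_measurable M" using g by auto
  show "integrable (PiM I (\<lambda>_. M)) (\<lambda>\<omega>. g (\<omega> m))"
    using integrable_distr_eq[OF proj g_meas] distr g by simp
  show "(\<integral>\<omega>. g (\<omega> m) \<partial>PiM I (\<lambda>_. M)) = (\<integral>x. g x \<partial>M)"
    using integral_distr[OF proj g_meas] distr by simp
qed

lemma integral_PiM_centred_factor:
  fixes g :: "'a \<Rightarrow> real"
  assumes M: "prob_space M" and I: "finite I" "m \<in> I"
    and g: "integrable M g" "(\<integral>x. g x \<partial>M) = 0"
    and G: "\<And>\<omega> y. G (fun_upd \<omega> m y) = G \<omega>"
    and int: "integrable (PiM I (\<lambda>_. M)) (\<lambda>\<omega>. g (\<omega> m) * G \<omega>)"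
  shows "(\<integral>\<omega>. g (\<omega> m) * G \<omega> \<partial>PiM I (\<lambda>_. M)) = 0"
proof -
  interpret product_sigma_finite "\<lambda>_. M"
    using M by (auto simp: product_sigma_finite_def intro: prob_space_imp_sigma_finite)
  define J where "J = I - {m}"
  have I_eq: "I = insert m J" and J: "finite J" "m \<notin> J"
    using I by (auto simp: J_def)
  have "(\<integral>\<omega>. g (\<omega> m) * G \<omega> \<partial>PiM I (\<lambda>_. M))
      = (\<integral>\<omega>. (\<integral>y. g y * G \<omega> \<partial>M) \<partial>PiM J (\<lambda>_. M))"
    using product_integral_insert[OF J, of "\<lambda>\<omega>. g (\<omega> m) * G \<omega>"] int
    by (simp add: I_eq G)
  also have "\<dots> = 0" using g by simp
  finally show ?thesis .
qed

definition paired :: "'a \<Rightarrow> 'a \<Rightarrow> 'a \<Rightarrow> 'a \<Rightarrow> bool" where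
  "paired j i j' i' \<longleftrightarrow> (j = i \<and> j' = i') \<or> (j = j' \<and> i = i') \<or> (j = i' \<and> i = j')"

lemma unpaired_has_singleton:
  assumes "\<not> paired a b c d"
  shows "a \<notin> {b, c, d} \<or> b \<notin> {a, c, d} \<or> c \<notin> {a, b, d} \<or> d \<notin> {a, b, c}"
  using assms unfolding paired_def by auto

lemma integral_PiM_unpaired_product:
  fixes \<phi>\<^sub>1 \<phi>\<^sub>2 \<phi>\<^sub>3 \<phi>\<^sub>4 :: "'a \<Rightarrow> real"
  assumes M: "prob_space M" and I: "finite I" "j \<in> I" "i \<in> I" "j' \<in> I" "i' \<in> I"
    and unpaired: "\<not> paired j i j' i'"
    and centred: "\<And>\<phi>. \<phi> \<in> {\<phi>\<^sub>1, \<phi>\<^sub>2, \<phi>\<^sub>3, \<phi>\<^sub>4} \<Longrightarrow> integrable M \<phi> \<and> (\<integral>x. \<phi> x \<partial>M) = 0"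
    and int: "integrable (PiM I (\<lambda>_. M)) (\<lambda>\<omega>. \<phi>\<^sub>1 (\<omega> j) * \<phi>\<^sub>2 (\<omega> i) * (\<phi>\<^sub>3 (\<omega> j') * \<phi>\<^sub>4 (\<omega> i')))"
  shows "(\<integral>\<omega>. \<phi>\<^sub>1 (\<omega> j) * \<phi>\<^sub>2 (\<omega> i) * (\<phi>\<^sub>3 (\<omega> j') * \<phi>\<^sub>4 (\<omega> i')) \<partial>PiM I (\<lambda>_. M)) = 0"
  using unpaired_has_singleton[OF unpaired]
proof (elim disjE)
  assume "j \<notin> {i, j', i'}"
  then have "(\<integral>\<omega>. \<phi>\<^sub>1 (\<omega> j) * (\<phi>\<^sub>2 (\<omega> i) * \<phi>\<^sub>3 (\<omega> j') * \<phi>\<^sub>4 (\<omega> i')) \<partial>PiM I (\<lambda>_. M)) = 0"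
    by (intro integral_PiM_centred_factor[OF M I(1,2)]) (use centred int in \<open>auto simp: ac_simps\<close>)
  then show ?thesis by (simp add: ac_simps)
next
  assume "i \<notin> {j, j', i'}"
  then have "(\<integral>\<omega>. \<phi>\<^sub>2 (\<omega> i) * (\<phi>\<^sub>1 (\<omega> j) * \<phi>\<^sub>3 (\<omega> j') * \<phi>\<^sub>4 (\<omega> i')) \<partial>PiM I (\<lambda>_. M)) = 0"
    by (intro integral_PiM_centred_factor[OF M I(1,3)]) (use centred int in \<open>auto simp: ac_simps\<close>)
  then show ?thesis by (simp add: ac_simps)
next
  assume "j' \<notin> {j, i, i'}"
  then have "(\<integral>\<omega>. \<phi>\<^sub>3 (\<omega> j') * (\<phi>\<^sub>1 (\<omega> j) * \<phi>\<^sub>2 (\<omega> i) * \<phi>\<^sub>4 (\<omega> i')) \<partial>PiM I (\<lambda>_. M)) = 0"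
    by (intro integral_PiM_centred_factor[OF M I(1,4)]) (use centred int in \<open>auto simp: ac_simps\<close>)
  then show ?thesis by (simp add: ac_simps)
next
  assume "i' \<notin> {j, i, j'}"
  then have "(\<integral>\<omega>. \<phi>\<^sub>4 (\<omega> i') * (\<phi>\<^sub>1 (\<omega> j) * \<phi>\<^sub>2 (\<omega> i) * \<phi>\<^sub>3 (\<omega> j')) \<partial>PiM I (\<lambda>_. M)) = 0"
    by (intro integral_PiM_centred_factor[OF M I(1,5)]) (use centred int in \<open>auto simp: ac_simps\<close>)
  then show ?thesis by (simp add: ac_simps)
qed

lemma
  fixes u :: "'a \<Rightarrow> real"
  assumes M: "prob_space M" and I: "i \<in> I" "i' \<in> I"
    and u: "u \<in> borel_measurable M" "integrable M (\<lambda>x. (u x)\<^sup>2)"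
    and F: "F \<in> borel_measurable (PiM I (\<lambda>_. M))"
    and bound: "\<And>\<omega>. \<bar>F \<omega>\<bar> \<le> u (\<omega> i) * u (\<omega> i')"
  shows integrable_PiM_dominated_pair: "integrable (PiM I (\<lambda>_. M)) F"
    and integral_PiM_dominated_pair_le: "(\<integral>\<omega>. F \<omega> \<partial>PiM I (\<lambda>_. M)) \<le> (\<integral>x. (u x)\<^sup>2 \<partial>M)"
proof -
  let ?P = "PiM I (\<lambda>_. M)"
  let ?G = "\<lambda>\<omega>. ((u (\<omega> i))\<^sup>2 + (u (\<omega> i'))\<^sup>2) / 2"
  have G_int: "integrable ?P ?G"
    by (intro integrable_divide Bochner_Integration.integrable_add
        integrable_PiM_component[OF M _ u(2)] I)
  have F_le_G: "\<bar>F \<omega>\<bar> \<le> ?G \<omega>" for \<omega>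
    using bound[of \<omega>] sum_squares_bound[of "u (\<omega> i)" "u (\<omega> i')"]
    by (simp add: field_simps)
  show F_int: "integrable ?P F"
  proof (rule Bochner_Integration.integrable_bound[OF G_int F], rule AE_I2)
    fix \<omega>
    show "norm (F \<omega>) \<le> norm (?G \<omega>)"
      using F_le_G[of \<omega>] abs_ge_self[of "?G \<omega>"] unfolding real_norm_def by linarith
  qed
  have "(\<integral>\<omega>. F \<omega> \<partial>?P) \<le> (\<integral>\<omega>. ?G \<omega> \<partial>?P)"
    using F_int G_int by (rule integral_mono) (rule order.trans[OF abs_ge_self F_le_G])
  also have "\<dots> = (\<integral>x. (u x)\<^sup>2 \<partial>M)"
    using I by (simp add: Bochner_Integration.integral_add
        integral_PiM_component[OF M _ u(2)] integrable_PiM_component[OF M _ u(2)])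
  finally show "(\<integral>\<omega>. F \<omega> \<partial>?P) \<le> (\<integral>x. (u x)\<^sup>2 \<partial>M)" .
qed

lemma sum_paired_le:
  "(\<Sum>j<k. \<Sum>i<k. \<Sum>j'<k. \<Sum>i'<k. of_bool (paired j i j' i') :: real) \<le> 3 * real k ^ 2"
proof -
  have "(\<Sum>j<k. \<Sum>i<k. \<Sum>j'<k. \<Sum>i'<k. of_bool (paired j i j' i') :: real)
    \<le> (\<Sum>j<k. \<Sum>i<k. \<Sum>j'<k. \<Sum>i'<k.
          of_bool (j = i \<and> j' = i') + of_bool (j = j' \<and> i = i') + of_bool (j = i' \<and> i = j'))"
    unfolding paired_def by (intro sum_mono) auto
  also have "\<dots> = 3 * real k ^ 2"
    by (simp add: sum.distrib of_bool_conj sum_distrib_left[symmetric] sum_distrib_right[symmetric]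
        power2_eq_square del: sum_of_bool_eq) (simp add: of_bool_def)
  finally show ?thesis .
qed

section \<open>The loss as a centred V-statistic\<close>

locale sampled_loss =
  fixes D :: "('x \<times> nat) measure" and MX :: "'x measure"
    and h :: "'x \<Rightarrow> 'z" and L :: "'z \<Rightarrow> nat \<Rightarrow> real"
    and c k :: nat
  assumes D_prob: "prob_space D"
    and D_sets: "sets D = sets (MX \<Otimes>\<^sub>M count_space {..<c})"
    and loss_nonneg: "\<And>z r. 0 \<le> L z r"
    and loss_meas: "\<And>r. r < c \<Longrightarrow> (\<lambda>x. L (h x) r) \<in> borel_measurable MX"
    and E_finite: "\<And>r. r < c \<Longrightarrow> integrable D (\<lambda>q. L (h (fst q)) r)"
    and k_pos: "0 < k"
begin

sublocale prob_space D
  by (rule D_prob)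

definition p :: "nat \<Rightarrow> real" where
  "p r = measure D {q \<in> space D. snd q = r}"

definition E :: "nat \<Rightarrow> real" where
  "E r = (\<integral>q. L (h (fst q)) r \<partial>D)"

definition S :: "(nat \<Rightarrow> 'x \<times> nat) measure" where
  "S = PiM {..<k} (\<lambda>_. D)"

definition label_dev :: "nat \<Rightarrow> 'x \<times> nat \<Rightarrow> real" where
  "label_dev r q = of_bool (snd q = r) - p r"

definition loss_dev :: "nat \<Rightarrow> 'x \<times> nat \<Rightarrow> real" where
  "loss_dev r q = L (h (fst q)) r - E r"

definition dev_kernel :: "'x \<times> nat \<Rightarrow> 'x \<times> nat \<Rightarrow> real" where
  "dev_kernel q q' = (\<Sum>r<c. label_dev r q * loss_dev r q')"

definition centred_stat :: "(nat \<Rightarrow> 'x \<times> nat) \<Rightarrow> real" where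
  "centred_stat \<omega> = (\<Sum>j<k. \<Sum>i<k. dev_kernel (\<omega> j) (\<omega> i)) / real k"

definition max_loss :: "'x \<times> nat \<Rightarrow> real" where
  "max_loss q = Max ((\<lambda>r. L (h (fst q)) r) ` {..<c})"

definition loss_dev_bound :: "'x \<times> nat \<Rightarrow> real" where
  "loss_dev_bound q = max_loss q + (\<integral>q'. max_loss q' \<partial>D)"

lemma space_D: "space D = space MX \<times> {..<c}"
  using sets_eq_imp_space_eq[OF D_sets] by (simp add: space_pair_measure)

lemma c_pos: "0 < c"
  using not_empty space_D by (cases c) auto

lemma measurable_D: "measurable D N = measurable (MX \<Otimes>\<^sub>M count_space {..<c}) N"
  by (rule measurable_cong_sets[OF D_sets refl])

lemma borel_measurable_label: "(\<lambda>q. of_bool (snd q = r) :: real) \<in> borel_measurable D"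
  unfolding measurable_D of_bool_def by measurable

lemma borel_measurable_label_dev: "label_dev r \<in> borel_measurable D"
  unfolding label_dev_def[abs_def] using borel_measurable_label by measurable

lemma borel_measurable_loss: "r < c \<Longrightarrow> (\<lambda>q. L (h (fst q)) r) \<in> borel_measurable D"
  unfolding measurable_D using loss_meas by measurable

lemma borel_measurable_loss_dev: "r < c \<Longrightarrow> loss_dev r \<in> borel_measurable D"
  unfolding loss_dev_def[abs_def] using borel_measurable_loss by measurable

lemma borel_measurable_max_loss: "max_loss \<in> borel_measurable D"
  unfolding max_loss_def[abs_def] by (rule borel_measurable_Max) (auto intro: borel_measurable_loss)

lemma label_sets: "{q \<in> space D. snd q = r} \<in> sets D"
proof -
  have "{q \<in> space (MX \<Otimes>\<^sub>M count_space {..<c}). snd q = r} \<in> sets (MX \<Otimes>\<^sub>M count_space {..<c})"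
    by measurable
  then show ?thesis
    using D_sets space_D by (simp add: space_pair_measure)
qed

lemma integral_label: "(\<integral>q. of_bool (snd q = r) \<partial>D) = p r"
proof -
  have "(\<integral>q. of_bool (snd q = r) \<partial>D) = (\<integral>q. indicator {q \<in> space D. snd q = r} q \<partial>D)"
    by (rule Bochner_Integration.integral_cong) auto
  also have "\<dots> = p r"
    by (simp add: p_def Int_absorb2)
  finally show ?thesis .
qed

lemma sum_p_le_1: "(\<Sum>r<c. p r) \<le> 1"
proof -
  have "(\<Sum>r<c. p r) = prob (\<Union>r<c. {q \<in> space D. snd q = r})"
    unfolding p_def
    by (rule finite_measure_finite_Union[symmetric]) (auto simp: label_sets disjoint_family_on_def)
  also have "\<dots> \<le> 1"
    by simp
  finally show ?thesis .
qed

lemma abs_label_dev_le: "\<bar>label_dev r q\<bar> \<le> 1"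
  using prob_le_1[of "{q \<in> space D. snd q = r}"] unfolding label_dev_def p_def by auto

lemma sum_abs_label_dev_le: "(\<Sum>r<c. \<bar>label_dev r q\<bar>) \<le> 2"
proof -
  have "(\<Sum>r<c. \<bar>label_dev r q\<bar>) \<le> (\<Sum>r<c. of_bool (snd q = r) + p r)"
    by (intro sum_mono) (auto simp: label_dev_def p_def)
  also have "\<dots> \<le> 2"
    using sum_p_le_1 by (simp add: sum.distrib of_bool_def)
  finally show ?thesis .
qed

lemma integrable_label: "integrable D (\<lambda>q. of_bool (snd q = r) :: real)"
  by (rule integrable_const_bound[where B = 1]) (simp_all add: borel_measurable_label)

lemma
  shows integrable_label_dev: "integrable D (label_dev r)"
    and integral_label_dev: "(\<integral>q. label_dev r q \<partial>D) = 0"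
  using integrable_label[of r] by (simp_all add: label_dev_def[abs_def] integral_label prob_space)

lemma
  assumes "r < c"
  shows integrable_loss_dev: "integrable D (loss_dev r)"
    and integral_loss_dev: "(\<integral>q. loss_dev r q \<partial>D) = 0"
  using E_finite[OF assms] by (simp_all add: loss_dev_def[abs_def] E_def prob_space)

lemma loss_le_max_loss: "r < c \<Longrightarrow> L (h (fst q)) r \<le> max_loss q"
  unfolding max_loss_def by (rule Max_ge) auto

lemma max_loss_nonneg: "0 \<le> max_loss q"
  using loss_le_max_loss[OF c_pos] loss_nonneg by (rule order.trans[rotated])

lemma integrable_max_loss: "integrable D max_loss"
proof (rule Bochner_Integration.integrable_bound)
  show "integrable D (\<lambda>q. \<Sum>r<c. L (h (fst q)) r)"
    using E_finite by auto
  show "AE q in D. norm (max_loss q) \<le> norm (\<Sum>r<c. L (h (fst q)) r)"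
  proof (rule AE_I2)
    fix q
    have "max_loss q \<in> (\<lambda>r. L (h (fst q)) r) ` {..<c}"
      unfolding max_loss_def using c_pos by (intro Max_in) auto
    then obtain r where "r < c" "max_loss q = L (h (fst q)) r"
      by auto
    then show "norm (max_loss q) \<le> norm (\<Sum>r<c. L (h (fst q)) r)"
      using loss_nonneg by (simp add: member_le_sum sum_nonneg)
  qed
qed (rule borel_measurable_max_loss)

lemma borel_measurable_loss_dev_bound: "loss_dev_bound \<in> borel_measurable D"
  unfolding loss_dev_bound_def[abs_def] using borel_measurable_max_loss by measurable

lemma loss_dev_bound_nonneg: "0 \<le> loss_dev_bound q"
  unfolding loss_dev_bound_def using max_loss_nonneg by (simp add: integral_nonneg)

lemma abs_loss_dev_le:
  assumes "r < c"
  shows "\<bar>loss_dev r q\<bar> \<le> loss_dev_bound q"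
proof -
  have "0 \<le> E r" "E r \<le> (\<integral>q'. max_loss q' \<partial>D)"
    using assms loss_nonneg loss_le_max_loss E_finite integrable_max_loss
    by (auto simp: E_def intro!: integral_mono)
  then show ?thesis
    using assms loss_nonneg[of "h (fst q)" r] loss_le_max_loss[of r q] max_loss_nonneg[of q]
    unfolding loss_dev_def loss_dev_bound_def by auto
qed

lemma abs_dev_kernel_le: "\<bar>dev_kernel q q'\<bar> \<le> 2 * loss_dev_bound q'"
proof -
  have "\<bar>dev_kernel q q'\<bar> \<le> (\<Sum>r<c. \<bar>label_dev r q\<bar> * loss_dev_bound q')"
    unfolding dev_kernel_def
    by (rule order.trans[OF sum_abs])
       (auto simp: abs_mult intro!: sum_mono mult_left_mono abs_loss_dev_le)
  also have "\<dots> \<le> 2 * loss_dev_bound q'"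
    unfolding sum_distrib_right[symmetric]
    by (rule mult_right_mono[OF sum_abs_label_dev_le loss_dev_bound_nonneg])
  finally show ?thesis .
qed

lemma abs_label_loss_le:
  assumes "r < c"
  shows "\<bar>label_dev r q * loss_dev r q'\<bar> \<le> loss_dev_bound q'"
proof -
  have "\<bar>label_dev r q * loss_dev r q'\<bar> \<le> \<bar>loss_dev r q'\<bar>"
    unfolding abs_mult by (rule mult_left_le_one_le) (simp_all add: abs_label_dev_le)
  also have "\<dots> \<le> loss_dev_bound q'"
    using assms by (rule abs_loss_dev_le)
  finally show ?thesis .
qed

lemma prob_space_S: "prob_space S"
  unfolding S_def by (rule prob_space_PiM) (rule D_prob)

lemma borel_measurable_component:
  "g \<in> borel_measurable D \<Longrightarrow> j < k \<Longrightarrow> (\<lambda>\<omega>. g (\<omega> j)) \<in> borel_measurable S"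
  unfolding S_def by (rule measurable_compose[OF measurable_component_singleton]) auto

lemma integrable_label_dev_mult:
  fixes g :: "'a \<Rightarrow> real"
  assumes "integrable M g" and "(\<lambda>x. label_dev r (f x)) \<in> borel_measurable M"
  shows "integrable M (\<lambda>x. label_dev r (f x) * g x)"
proof (rule Bochner_Integration.integrable_bound[OF integrable_abs[OF assms(1)]])
  show "AE x in M. norm (label_dev r (f x) * g x) \<le> norm \<bar>g x\<bar>"
    by (intro AE_I2) (simp add: abs_mult mult_left_le_one_le abs_label_dev_le)
qed (use assms in measurable)

lemma integrable_label_loss: "r < c \<Longrightarrow> integrable D (\<lambda>q. label_dev r q * loss_dev r q)"
  by (rule integrable_label_dev_mult[where f = "\<lambda>q. q",
        OF integrable_loss_dev borel_measurable_label_dev])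

lemma
  assumes "j < k" "i < k" "r < c"
  shows integrable_label_loss_component: "integrable S (\<lambda>\<omega>. label_dev r (\<omega> j) * loss_dev r (\<omega> i))"
    and integral_label_loss_component: "(\<integral>\<omega>. label_dev r (\<omega> j) * loss_dev r (\<omega> i) \<partial>S)
      = of_bool (j = i) * (\<integral>q. label_dev r q * loss_dev r q \<partial>D)"
proof -
  show int: "integrable S (\<lambda>\<omega>. label_dev r (\<omega> j) * loss_dev r (\<omega> i))"
    using assms unfolding S_def
    by (intro integrable_label_dev_mult integrable_PiM_component[OF D_prob] integrable_loss_dev
        borel_measurable_component[unfolded S_def] borel_measurable_label_dev) auto
  show "(\<integral>\<omega>. label_dev r (\<omega> j) * loss_dev r (\<omega> i) \<partial>S)
      = of_bool (j = i) * (\<integral>q. label_dev r q * loss_dev r q \<partial>D)"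
  proof (cases "j = i")
    case True
    then show ?thesis
      using integral_PiM_component[OF D_prob _ integrable_label_loss, of i "{..<k}" r] assms
      unfolding S_def by simp
  next
    case False
    then show ?thesis
      using assms int unfolding S_def
      by (simp, intro integral_PiM_centred_factor[OF D_prob] integrable_label_dev
          integral_label_dev) auto
  qed
qed

lemma integrable_dev_kernel_component [simp]:
  "j < k \<Longrightarrow> i < k \<Longrightarrow> integrable S (\<lambda>\<omega>. dev_kernel (\<omega> j) (\<omega> i))"
  unfolding dev_kernel_def by (auto intro: integrable_label_loss_component)

lemma integral_dev_kernel_component:
  "j < k \<Longrightarrow> i < k \<Longrightarrow> (\<integral>\<omega>. dev_kernel (\<omega> j) (\<omega> i) \<partial>S) = of_bool (j = i) * (\<integral>q. dev_kernel q q \<partial>D)"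
  unfolding dev_kernel_def
  by (simp add: integrable_label_loss_component integral_label_loss_component sum_distrib_left
      integrable_label_loss)

lemma
  shows integrable_centred_stat: "integrable S centred_stat"
    and integral_centred_stat: "(\<integral>\<omega>. centred_stat \<omega> \<partial>S) = (\<integral>q. dev_kernel q q \<partial>D)"
proof -
  have row_int: "j < k \<Longrightarrow> integrable S (\<lambda>\<omega>. \<Sum>i<k. dev_kernel (\<omega> j) (\<omega> i))" for j
    by (auto intro!: Bochner_Integration.integrable_sum)
  then show "integrable S centred_stat"
    unfolding centred_stat_def[abs_def] by (auto intro!: Bochner_Integration.integrable_sum)
  have "(\<integral>\<omega>. (\<Sum>j<k. \<Sum>i<k. dev_kernel (\<omega> j) (\<omega> i)) \<partial>S) = real k * (\<integral>q. dev_kernel q q \<partial>D)"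
    by (simp add: row_int integral_dev_kernel_component sum_distrib_right[symmetric] of_bool_def)
  then show "(\<integral>\<omega>. centred_stat \<omega> \<partial>S) = (\<integral>q. dev_kernel q q \<partial>D)"
    using k_pos unfolding centred_stat_def[abs_def] by simp
qed

lemma integrable_label_mult_loss:
  "r < c \<Longrightarrow> integrable D (\<lambda>q. of_bool (snd q = r) * L (h (fst q)) r)"
  by (rule Bochner_Integration.integrable_bound[OF E_finite])
     (auto intro!: AE_I2 borel_measurable_times borel_measurable_label borel_measurable_loss
       simp: loss_nonneg)

lemma integral_label_loss:
  assumes r: "r < c"
  shows "(\<integral>q. label_dev r q * loss_dev r q \<partial>D)
    = (\<integral>q. of_bool (snd q = r) * L (h (fst q)) r \<partial>D) - p r * E r"
proof -
  have "(\<lambda>q. label_dev r q * loss_dev r q) = (\<lambda>q. of_bool (snd q = r) * L (h (fst q)) r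
      - E r * of_bool (snd q = r) - p r * L (h (fst q)) r + p r * E r)"
    by (auto simp: label_dev_def loss_dev_def algebra_simps)
  then show ?thesis
    using integrable_label integrable_label_mult_loss[OF r] E_finite[OF r]
    by (simp add: integral_label prob_space flip: E_def)
qed

lemma integral_dev_kernel_diag:
  "(\<integral>q. dev_kernel q q \<partial>D) + (\<Sum>r<c. p r * E r) = (\<integral>q. L (h (fst q)) (snd q) \<partial>D)"
proof -
  have "(\<integral>q. dev_kernel q q \<partial>D) + (\<Sum>r<c. p r * E r)
      = (\<Sum>r<c. \<integral>q. of_bool (snd q = r) * L (h (fst q)) r \<partial>D)"
    by (simp add: dev_kernel_def integrable_label_loss integral_label_loss sum_subtractf)
  also have "\<dots> = (\<integral>q. (\<Sum>r<c. of_bool (snd q = r) * L (h (fst q)) r) \<partial>D)"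
    by (rule Bochner_Integration.integral_sum[symmetric]) (simp add: integrable_label_mult_loss)
  also have "\<dots> = (\<integral>q. L (h (fst q)) (snd q) \<partial>D)"
    by (rule Bochner_Integration.integral_cong) (auto simp: space_D)
  finally show ?thesis .
qed

lemma ell_b_eq_centred_stat: "ell_b L h c k p E \<omega> = centred_stat \<omega> + (\<Sum>r<c. p r * E r)"
proof -
  have freq: "emp_freq k r \<omega> - p r = (\<Sum>j<k. label_dev r (\<omega> j)) / real k" for r
    using k_pos by (simp add: emp_freq_def label_dev_def of_bool_def sum_subtractf field_simps)
  have "(\<Sum>r<c. (emp_freq k r \<omega> - p r) * (\<Sum>i<k. L (h (fst (\<omega> i))) r - E r))
      = (\<Sum>r<c. \<Sum>j<k. \<Sum>i<k. label_dev r (\<omega> j) * loss_dev r (\<omega> i)) / real k"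
    by (simp add: freq loss_dev_def sum_product sum_divide_distrib)
  also have "(\<Sum>r<c. \<Sum>j<k. \<Sum>i<k. label_dev r (\<omega> j) * loss_dev r (\<omega> i))
      = (\<Sum>j<k. \<Sum>r<c. \<Sum>i<k. label_dev r (\<omega> j) * loss_dev r (\<omega> i))"
    by (rule sum.swap)
  also have "\<dots> = (\<Sum>j<k. \<Sum>i<k. dev_kernel (\<omega> j) (\<omega> i))"
    unfolding dev_kernel_def by (intro sum.cong refl sum.swap)
  finally show ?thesis
    unfolding ell_b_def centred_stat_def by simp
qed

lemma integral_ell_b: "(\<integral>\<omega>. ell_b L h c k p E \<omega> \<partial>S) = (\<integral>q. L (h (fst q)) (snd q) \<partial>D)"
  using integrable_centred_stat prob_space_S
  by (simp add: ell_b_eq_centred_stat integral_centred_stat prob_space.prob_space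
      finite_measure.integrable_const prob_space.finite_measure integral_dev_kernel_diag)

subsection \<open>Second moment\<close>

context
  assumes max_loss_sq_int: "integrable D (\<lambda>q. (max_loss q)\<^sup>2)"
begin

lemma mean_max_loss_sq_le: "(\<integral>q. max_loss q \<partial>D)\<^sup>2 \<le> (\<integral>q. (max_loss q)\<^sup>2 \<partial>D)"
  using variance_positive[of max_loss] variance_eq[OF integrable_max_loss max_loss_sq_int] by simp

lemma integrable_loss_dev_bound_sq: "integrable D (\<lambda>q. (loss_dev_bound q)\<^sup>2)"
  using max_loss_sq_int integrable_max_loss by (simp add: loss_dev_bound_def power2_sum)

lemma integral_loss_dev_bound_sq_le: "(\<integral>q. (loss_dev_bound q)\<^sup>2 \<partial>D) \<le> 4 * (\<integral>q. (max_loss q)\<^sup>2 \<partial>D)"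
proof -
  let ?m = "\<integral>q. max_loss q \<partial>D"
  have "(\<integral>q. (loss_dev_bound q)\<^sup>2 \<partial>D) \<le> (\<integral>q. 2 * (max_loss q)\<^sup>2 + 2 * ?m\<^sup>2 \<partial>D)"
  proof (rule integral_mono[OF integrable_loss_dev_bound_sq])
    show "integrable D (\<lambda>q. 2 * (max_loss q)\<^sup>2 + 2 * ?m\<^sup>2)"
      using max_loss_sq_int by simp
    show "(loss_dev_bound q)\<^sup>2 \<le> 2 * (max_loss q)\<^sup>2 + 2 * ?m\<^sup>2" for q
      using sum_squares_bound[of "max_loss q" ?m] by (simp add: loss_dev_bound_def power2_sum)
  qed
  also have "\<dots> = 2 * (\<integral>q. (max_loss q)\<^sup>2 \<partial>D) + 2 * ?m\<^sup>2"
    using max_loss_sq_int by (simp add: prob_space)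
  also have "\<dots> \<le> 4 * (\<integral>q. (max_loss q)\<^sup>2 \<partial>D)"
    using mean_max_loss_sq_le by simp
  finally show ?thesis .
qed

lemma integrable_label_loss_product:
  assumes "j < k" "i < k" "j' < k" "i' < k" "r < c" "s < c"
  shows "integrable S
    (\<lambda>\<omega>. label_dev r (\<omega> j) * loss_dev r (\<omega> i) * (label_dev s (\<omega> j') * loss_dev s (\<omega> i')))"
  unfolding S_def
proof (rule integrable_PiM_dominated_pair[OF D_prob _ _ borel_measurable_loss_dev_bound
      integrable_loss_dev_bound_sq])
  show "(\<lambda>\<omega>. label_dev r (\<omega> j) * loss_dev r (\<omega> i) * (label_dev s (\<omega> j') * loss_dev s (\<omega> i')))
      \<in> borel_measurable (PiM {..<k} (\<lambda>_. D))"
    using assms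
    by (intro borel_measurable_times borel_measurable_component[unfolded S_def]
        borel_measurable_label_dev borel_measurable_loss_dev)
  show "\<bar>label_dev r (\<omega> j) * loss_dev r (\<omega> i) * (label_dev s (\<omega> j') * loss_dev s (\<omega> i'))\<bar>
      \<le> loss_dev_bound (\<omega> i) * loss_dev_bound (\<omega> i')" for \<omega>
    unfolding abs_mult[of "label_dev r (\<omega> j) * loss_dev r (\<omega> i)"]
    using assms by (intro mult_mono abs_label_loss_le loss_dev_bound_nonneg abs_ge_zero)
qed (use assms in auto)

lemma integrable_dev_kernel_product [intro]:
  "j < k \<Longrightarrow> i < k \<Longrightarrow> j' < k \<Longrightarrow> i' < k \<Longrightarrow>
    integrable S (\<lambda>\<omega>. dev_kernel (\<omega> j) (\<omega> i) * dev_kernel (\<omega> j') (\<omega> i'))"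
  unfolding dev_kernel_def sum_product
  by (auto intro!: Bochner_Integration.integrable_sum integrable_label_loss_product)

lemma integral_dev_kernel_product_le:
  assumes idx: "j < k" "i < k" "j' < k" "i' < k"
  shows "(\<integral>\<omega>. dev_kernel (\<omega> j) (\<omega> i) * dev_kernel (\<omega> j') (\<omega> i') \<partial>S)
    \<le> 16 * (\<integral>q. (max_loss q)\<^sup>2 \<partial>D) * of_bool (paired j i j' i')"
proof (cases "paired j i j' i'")
  case True
  have "(\<integral>\<omega>. dev_kernel (\<omega> j) (\<omega> i) * dev_kernel (\<omega> j') (\<omega> i') \<partial>S)
      \<le> (\<integral>q. (2 * loss_dev_bound q)\<^sup>2 \<partial>D)"
    unfolding S_def
  proof (rule integral_PiM_dominated_pair_le[OF D_prob])
    show "(\<lambda>q. 2 * loss_dev_bound q) \<in> borel_measurable D"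
      using borel_measurable_loss_dev_bound by measurable
    show "integrable D (\<lambda>q. (2 * loss_dev_bound q)\<^sup>2)"
      using integrable_loss_dev_bound_sq by (simp add: power_mult_distrib)
    show "(\<lambda>\<omega>. dev_kernel (\<omega> j) (\<omega> i) * dev_kernel (\<omega> j') (\<omega> i'))
        \<in> borel_measurable (PiM {..<k} (\<lambda>_. D))"
      using integrable_dev_kernel_product[OF idx] unfolding S_def by auto
    show "\<bar>dev_kernel (\<omega> j) (\<omega> i) * dev_kernel (\<omega> j') (\<omega> i')\<bar>
        \<le> 2 * loss_dev_bound (\<omega> i) * (2 * loss_dev_bound (\<omega> i'))" for \<omega>
      unfolding abs_mult
      by (intro mult_mono abs_dev_kernel_le abs_ge_zero) (simp add: loss_dev_bound_nonneg)
  qed (use idx in auto)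
  also have "\<dots> = 4 * (\<integral>q. (loss_dev_bound q)\<^sup>2 \<partial>D)"
    by (simp add: power_mult_distrib)
  also have "\<dots> \<le> 16 * (\<integral>q. (max_loss q)\<^sup>2 \<partial>D)"
    using integral_loss_dev_bound_sq_le by simp
  finally show ?thesis
    using True by simp
next
  case False
  have row_int: "r < c \<Longrightarrow> integrable S (\<lambda>\<omega>. \<Sum>s<c. label_dev r (\<omega> j) * loss_dev r (\<omega> i)
      * (label_dev s (\<omega> j') * loss_dev s (\<omega> i')))" for r
    using idx by (auto intro!: Bochner_Integration.integrable_sum integrable_label_loss_product)
  have "(\<integral>\<omega>. dev_kernel (\<omega> j) (\<omega> i) * dev_kernel (\<omega> j') (\<omega> i') \<partial>S)
      = (\<Sum>r<c. \<Sum>s<c. \<integral>\<omega>. label_dev r (\<omega> j) * loss_dev r (\<omega> i)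
          * (label_dev s (\<omega> j') * loss_dev s (\<omega> i')) \<partial>S)"
    using idx by (simp add: dev_kernel_def sum_product row_int integrable_label_loss_product)
  also have "\<dots> = 0"
    using idx False integrable_label_loss_product[OF idx] unfolding S_def
    by (intro sum.neutral ballI integral_PiM_unpaired_product[OF D_prob])
       (auto simp: integrable_label_dev integral_label_dev integrable_loss_dev integral_loss_dev)
  finally show ?thesis
    using False by simp
qed

lemma
  shows integrable_centred_stat_sq: "integrable S (\<lambda>\<omega>. (centred_stat \<omega>)\<^sup>2)"
    and integral_centred_stat_sq_le: "(\<integral>\<omega>. (centred_stat \<omega>)\<^sup>2 \<partial>S) \<le> 48 * (\<integral>q. (max_loss q)\<^sup>2 \<partial>D)"
proof -
  let ?K = "\<lambda>j i \<omega>. dev_kernel (\<omega> j) (\<omega> i)"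
  have sq: "(centred_stat \<omega>)\<^sup>2
      = (\<Sum>j<k. \<Sum>i<k. \<Sum>j'<k. \<Sum>i'<k. ?K j i \<omega> * ?K j' i' \<omega>) / (real k)\<^sup>2" for \<omega>
    unfolding centred_stat_def power2_eq_square[of "_ / _"]
    by (simp only: times_divide_times_eq sum_distrib_right power2_eq_square)
       (simp only: sum_distrib_left)
  have int3: "j < k \<Longrightarrow> i < k \<Longrightarrow> j' < k \<Longrightarrow> integrable S (\<lambda>\<omega>. \<Sum>i'<k. ?K j i \<omega> * ?K j' i' \<omega>)"
    and int2: "j < k \<Longrightarrow> i < k \<Longrightarrow> integrable S (\<lambda>\<omega>. \<Sum>j'<k. \<Sum>i'<k. ?K j i \<omega> * ?K j' i' \<omega>)"
    and int1: "j < k \<Longrightarrow> integrable S (\<lambda>\<omega>. \<Sum>i<k. \<Sum>j'<k. \<Sum>i'<k. ?K j i \<omega> * ?K j' i' \<omega>)"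
    for j i j'
    by (auto intro!: Bochner_Integration.integrable_sum)
  show "integrable S (\<lambda>\<omega>. (centred_stat \<omega>)\<^sup>2)"
    unfolding sq using int1 by (auto intro!: Bochner_Integration.integrable_sum)
  have "(\<integral>\<omega>. (centred_stat \<omega>)\<^sup>2 \<partial>S)
      = (\<Sum>j<k. \<Sum>i<k. \<Sum>j'<k. \<Sum>i'<k. \<integral>\<omega>. ?K j i \<omega> * ?K j' i' \<omega> \<partial>S) / (real k)\<^sup>2"
    unfolding sq by (simp add: int1 int2 int3 integrable_dev_kernel_product)
  also have "\<dots> \<le> (\<Sum>j<k. \<Sum>i<k. \<Sum>j'<k. \<Sum>i'<k.
      16 * (\<integral>q. (max_loss q)\<^sup>2 \<partial>D) * of_bool (paired j i j' i')) / (real k)\<^sup>2"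
    by (intro divide_right_mono sum_mono integral_dev_kernel_product_le) auto
  also have "\<dots> \<le> 16 * (\<integral>q. (max_loss q)\<^sup>2 \<partial>D) * (3 * (real k)\<^sup>2) / (real k)\<^sup>2"
    unfolding sum_distrib_left[symmetric]
    by (intro divide_right_mono mult_left_mono sum_paired_le) simp_all
  also have "\<dots> = 48 * (\<integral>q. (max_loss q)\<^sup>2 \<partial>D)"
    using k_pos by simp
  finally show "(\<integral>\<omega>. (centred_stat \<omega>)\<^sup>2 \<partial>S) \<le> 48 * (\<integral>q. (max_loss q)\<^sup>2 \<partial>D)" .
qed

lemma variance_ell_b_le_48:
  "(\<integral>\<omega>. (ell_b L h c k p E \<omega> - (\<integral>\<omega>'. ell_b L h c k p E \<omega>' \<partial>S))\<^sup>2 \<partial>S)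
    \<le> 48 * (\<integral>q. (max_loss q)\<^sup>2 \<partial>D)"
proof -
  interpret S: prob_space S
    by (rule prob_space_S)
  have "(\<integral>\<omega>. (ell_b L h c k p E \<omega> - (\<integral>\<omega>'. ell_b L h c k p E \<omega>' \<partial>S))\<^sup>2 \<partial>S)
      = S.variance centred_stat"
    using integrable_centred_stat by (simp add: ell_b_eq_centred_stat S.prob_space)
  also have "\<dots> = (\<integral>\<omega>. (centred_stat \<omega>)\<^sup>2 \<partial>S) - (\<integral>\<omega>. centred_stat \<omega> \<partial>S)\<^sup>2"
    by (rule S.variance_eq[OF integrable_centred_stat integrable_centred_stat_sq])
  also have "\<dots> \<le> 48 * (\<integral>q. (max_loss q)\<^sup>2 \<partial>D)"
    using integral_centred_stat_sq_le zero_le_power2[of "\<integral>\<omega>. centred_stat \<omega> \<partial>S"] by linarith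
  finally show ?thesis .
qed

end

lemma variance_ell_b_le:
  "ennreal (\<integral>\<omega>. (ell_b L h c k p E \<omega> - (\<integral>\<omega>'. ell_b L h c k p E \<omega>' \<partial>S))\<^sup>2 \<partial>S)
    \<le> 48 * (\<integral>\<^sup>+q. ennreal ((max_loss q)\<^sup>2) \<partial>D)"
proof (cases "(\<integral>\<^sup>+q. ennreal ((max_loss q)\<^sup>2) \<partial>D) = \<infinity>")
  case True
  then show ?thesis
    by simp
next
  case False
  then have int: "integrable D (\<lambda>q. (max_loss q)\<^sup>2)"
    using borel_measurable_max_loss by (intro integrableI_nonneg) (auto simp: top.not_eq_extremum)
  have "ennreal (\<integral>\<omega>. (ell_b L h c k p E \<omega> - (\<integral>\<omega>'. ell_b L h c k p E \<omega>' \<partial>S))\<^sup>2 \<partial>S)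
      \<le> ennreal (48 * (\<integral>q. (max_loss q)\<^sup>2 \<partial>D))"
    by (rule ennreal_leI[OF variance_ell_b_le_48[OF int]])
  also have "\<dots> = 48 * (\<integral>\<^sup>+q. ennreal ((max_loss q)\<^sup>2) \<partial>D)"
    using int by (simp add: nn_integral_eq_integral ennreal_mult')
  finally show ?thesis .
qed

end

theorem lemma3:
  fixes D :: "('x \<times> nat) measure" and MX :: "'x measure"
    and h :: "'x \<Rightarrow> 'z" and L :: "'z \<Rightarrow> nat \<Rightarrow> real"
    and c k :: nat
  assumes D_prob: "prob_space D"
    and D_sets: "sets D = sets (MX \<Otimes>\<^sub>M count_space {..<c})"
    and loss_nonneg: "\<And>z r. 0 \<le> L z r"
    and loss_meas: "\<And>r. r < c \<Longrightarrow> (\<lambda>x. L (h x) r) \<in> borel_measurable MX"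
    and E_finite: "\<And>r. r < c \<Longrightarrow> integrable D (\<lambda>q. L (h (fst q)) r)"
    and k_pos: "0 < k"
  defines "p \<equiv> (\<lambda>r. measure D {q \<in> space D. snd q = r})"
    and "E \<equiv> (\<lambda>r. \<integral>q. L (h (fst q)) r \<partial>D)"
    and "S \<equiv> PiM {..<k} (\<lambda>_. D)"
  shows "(\<integral>\<omega>. ell_b L h c k p E \<omega> \<partial>S) = (\<integral>q. L (h (fst q)) (snd q) \<partial>D)
    \<and> ennreal (\<integral>\<omega>. (ell_b L h c k p E \<omega> - (\<integral>\<omega>'. ell_b L h c k p E \<omega>' \<partial>S))\<^sup>2 \<partial>S)
        \<le> 64 * (\<integral>\<^sup>+q. ennreal ((Max ((\<lambda>r. L (h (fst q)) r) ` {..<c}))\<^sup>2) \<partial>D)"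
proof -
  interpret I: sampled_loss D MX h L c k
    using D_prob D_sets loss_nonneg loss_meas E_finite k_pos by (rule sampled_loss.intro)
  have defs: "p = I.p" "E = I.E" "S = I.S"
    by (simp_all add: p_def I.p_def[abs_def] E_def I.E_def[abs_def] S_def I.S_def)
  have "ennreal (\<integral>\<omega>. (ell_b L h c k p E \<omega> - (\<integral>\<omega>'. ell_b L h c k p E \<omega>' \<partial>S))\<^sup>2 \<partial>S)
      \<le> 48 * (\<integral>\<^sup>+q. ennreal ((I.max_loss q)\<^sup>2) \<partial>D)"
    unfolding defs by (rule I.variance_ell_b_le)
  also have "\<dots> \<le> 64 * (\<integral>\<^sup>+q. ennreal ((I.max_loss q)\<^sup>2) \<partial>D)"
    by (rule mult_right_mono) simp_all
  finally show ?thesis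
    using I.integral_ell_b unfolding defs I.max_loss_def by simp
qed

end
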